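(* Let $d\ge1$, $0<s<d$, and let $\nu$ be a Frostman measure on a compact set $E\subset\mathbb{R}^d$ with $\dim_{\mathcal H}(E)>d-s$. For $\delta\in(0,1]$ and $\alpha\in\mathbb{C}$ with $\operatorname{Re}(\alpha)=\frac{s}{2}$, let $\nu^\delta_\alpha$ be as defined below. Then $\|\nu^\delta_\alpha\|_{L^2(\mathbb{R}^d)}\lesssim1$ with a constant independent of $\delta$.
   Context: A Frostman measure on $E$ is a Borel probability measure supported on $E$ with $\nu(B(x,r))\le Cr^{s'}$ for all $x,r>0$, for some $s'>d-s$. Let $\rho$ be a nonnegative smooth function on $\mathbb{R}^d$ with $\int\rho=1$, supported in the unit ball; set $\rho_\delta(x)=\delta^{-d}\rho(x/\delta)$ and $\nu^\delta=\nu*\rho_\delta$. For $\operatorname{Re}(\beta)>0$, $\nu^\delta_\beta(x)=\frac{2^{(d-\beta)/2}}{\Gamma(\beta/2)}(\nu^\delta*|\cdot|^{-d+\beta})(x)$. *)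

theory Defs
  imports "HOL-Analysis.Analysis" "HOL-Probability.Probability"
begin

coinductive smooth_fun :: "('a::euclidean_space \<Rightarrow> real) \<Rightarrow> bool" where
  "(\<forall>x. f differentiable (at x)) \<Longrightarrow>
   (\<forall>i\<in>Basis. smooth_fun (\<lambda>x. frechet_derivative f (at x) i)) \<Longrightarrow> smooth_fun f"

definition hausdorff_pre :: "real \<Rightarrow> real \<Rightarrow> 'a::euclidean_space set \<Rightarrow> ennreal" where
  "hausdorff_pre t \<epsilon> E =
     (INF C \<in> {C :: nat \<Rightarrow> 'a set. E \<subseteq> (\<Union>i. C i) \<and> (\<forall>i. diameter (C i) \<le> \<epsilon>)}.
        (\<Sum>i. ennreal (diameter (C i) powr t)))"

definition hausdorff_measure :: "real \<Rightarrow> 'a::euclidean_space set \<Rightarrow> ennreal" where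
  "hausdorff_measure t E = (SUP \<epsilon> \<in> {0<..}. hausdorff_pre t \<epsilon> E)"

definition hausdorff_dim :: "'a::euclidean_space set \<Rightarrow> real" where
  "hausdorff_dim E = Inf {t. t \<ge> 0 \<and> hausdorff_measure t E = 0}"

definition frostman_measure :: "'a::euclidean_space measure \<Rightarrow> 'a set \<Rightarrow> real \<Rightarrow> bool" where
  "frostman_measure \<nu> E a \<longleftrightarrow>
     sets \<nu> = sets borel \<and> prob_space \<nu> \<and> emeasure \<nu> (UNIV - E) = 0 \<and>
     (\<exists>C s'. s' > a \<and> (\<forall>x r. r > 0 \<longrightarrow> measure \<nu> (ball x r) \<le> C * r powr s'))"

definition mollifier :: "('a::euclidean_space \<Rightarrow> real) \<Rightarrow> real \<Rightarrow> 'a \<Rightarrow> real" where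
  "mollifier \<rho> \<delta> x = \<delta> powr (- real DIM('a)) * \<rho> (x /\<^sub>R \<delta>)"

definition mollified :: "'a::euclidean_space measure \<Rightarrow> ('a \<Rightarrow> real) \<Rightarrow> real \<Rightarrow> 'a \<Rightarrow> real" where
  "mollified \<nu> \<rho> \<delta> x = (\<integral>y. mollifier \<rho> \<delta> (x - y) \<partial>\<nu>)"

definition riesz_nu :: "'a::euclidean_space measure \<Rightarrow> ('a \<Rightarrow> real) \<Rightarrow> real \<Rightarrow> complex \<Rightarrow> 'a \<Rightarrow> complex" where
  "riesz_nu \<nu> \<rho> \<delta> \<beta> x =
     (2 powr ((of_nat DIM('a) - \<beta>) / 2) / Gamma (\<beta> / 2)) *
     (\<integral>y. complex_of_real (mollified \<nu> \<rho> \<delta> y) *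
            complex_of_real (norm (x - y)) powr (\<beta> - of_nat DIM('a)) \<partial>lborel)"

end

theory Submission
  imports Defs
begin

text \<open>
  Since \<open>Re \<alpha> = s/2\<close>, the potential \<open>\<nu>^\<delta>_\<alpha>(x)\<close> is bounded by a constant times
  \<open>\<integral> \<nu>^\<delta>(y) |x - y|^(s/2 - d) dy\<close>. Squaring, integrating in \<open>x\<close> and using the composition
  estimate \<open>\<integral> |x - y|^(s/2 - d) |x - z|^(s/2 - d) dx \<lesssim> |y - z|^(s - d)\<close> bounds the squared
  \<open>L\<^sup>2\<close> norm by the \<open>(d - s)\<close>-energy of \<open>\<nu>^\<delta>\<close>. As \<open>\<nu>^\<delta>(y) \<lesssim> \<delta>^(-d) \<nu>(B(y, \<delta>))\<close>, that
  energy is at most the energy of \<open>\<nu>\<close> for the kernel averaged over pairs of \<open>\<delta>\<close>-balls, and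
  the averaged kernel is dominated by the kernel itself, uniformly in \<open>\<delta>\<close>. The Frostman
  condition with exponent \<open>s' > d - s\<close> makes the energy of \<open>\<nu>\<close> finite. All these integral
  bounds come from cutting the singular kernel into dyadic shells and using the growth \<open>r^t\<close>
  of the measure of balls.
\<close>

section \<open>Dyadic decomposition of singular integrals\<close>

text \<open>The kernel \<open>t^(-g)\<close>, taken to be \<open>\<infinity>\<close> at the pole (HOL's \<open>0 powr -g\<close> is \<open>0\<close>).\<close>

definition singular_powr :: "real \<Rightarrow> real \<Rightarrow> ennreal" where
  "singular_powr g t = (if t = 0 then \<infinity> else ennreal (t powr -g))"

lemma singular_powr_measurable[measurable (raw)]:
  assumes [measurable]: "f \<in> borel_measurable M"
  shows "(\<lambda>x. singular_powr g (f x)) \<in> borel_measurable M"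
  unfolding singular_powr_def by measurable

text \<open>\<open>borel_measurable_dist\<close> needs a second countable space; for a fixed centre continuity suffices.\<close>

lemma borel_measurable_dist_const_right[measurable]:
  "(\<lambda>x. dist x (y::'a::metric_space)) \<in> borel_measurable borel"
  by (intro borel_measurable_continuous_onI continuous_intros)

lemma sets_borel_ball[measurable]: "ball (y::'a::metric_space) r \<in> sets borel"
  by simp

lemma dyadic_interval_le_less:
  fixes x :: real
  assumes "1 \<le> x"
  obtains k :: nat where "2 ^ k \<le> x" "x < 2 ^ Suc k"
proof
  have "real (nat \<lfloor>log 2 x\<rfloor>) = \<lfloor>log 2 x\<rfloor>" using assms by simp
  moreover have "2 powr \<lfloor>log 2 x\<rfloor> \<le> x \<and> x < 2 powr (\<lfloor>log 2 x\<rfloor> + 1)"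
    using floor_log_eq_powr_iff[of x 2 "\<lfloor>log 2 x\<rfloor>"] assms by simp
  ultimately show "2 ^ nat \<lfloor>log 2 x\<rfloor> \<le> x" "x < 2 ^ Suc (nat \<lfloor>log 2 x\<rfloor>)"
    by (simp_all add: powr_realpow[symmetric] powr_add)
qed

lemma dyadic_interval_less_le:
  fixes x :: real
  assumes "1 < x"
  obtains k :: nat where "2 ^ k < x" "x \<le> 2 ^ Suc k"
proof
  have "0 < log 2 x" using assms by simp
  then have k: "\<lceil>log 2 x\<rceil> = int (nat (\<lceil>log 2 x\<rceil> - 1)) + 1" by linarith
  have "2 powr real (nat (\<lceil>log 2 x\<rceil> - 1)) < x \<and> x \<le> 2 powr (real (nat (\<lceil>log 2 x\<rceil> - 1)) + 1)"
    using ceiling_log_eq_powr_iff[of x 2 "nat (\<lceil>log 2 x\<rceil> - 1)"] k assms by simp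
  then show "2 ^ nat (\<lceil>log 2 x\<rceil> - 1) < x" "x \<le> 2 ^ Suc (nat (\<lceil>log 2 x\<rceil> - 1))"
    by (simp_all add: powr_realpow[symmetric] powr_add)
qed

lemma suminf_ennreal_geometric:
  fixes K q :: real
  assumes "0 \<le> K" "0 \<le> q" "q < 1"
  shows "(\<Sum>k. ennreal (K * q ^ k)) = ennreal (K / (1 - q))"
proof -
  have "summable (\<lambda>k. K * q ^ k)"
    using assms by (intro summable_mult summable_geometric) auto
  then have "(\<Sum>k. ennreal (K * q ^ k)) = ennreal (\<Sum>k. K * q ^ k)"
    using assms by (intro suminf_ennreal2) auto
  also have "\<dots> = ennreal (K / (1 - q))"
    using assms by (simp add: suminf_mult suminf_geometric)
  finally show ?thesis .
qed

lemma suminf_ennreal_const_top: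
  assumes "0 < c" shows "(\<Sum>k::nat. ennreal c) = \<infinity>"
  unfolding infinity_ennreal_def using assms
  by (intro summable_iff_suminf_neq_top) (auto simp: summable_const_iff)

lemma ennreal_le_suminf: "f k \<le> (\<Sum>i. f i :: ennreal)"
  using sum_le_suminf[of f "{k}"] by (simp add: summableI)

lemma nn_integral_le_suminf_balls:
  fixes \<mu> :: "'a::metric_space measure"
  assumes sets: "sets \<mu> = sets borel"
    and ball: "\<And>r. 0 < r \<Longrightarrow> emeasure \<mu> (ball w r) \<le> ennreal (A * r powr t)"
    and r: "\<And>k. 0 < r k" and c: "\<And>k. 0 \<le> c k"
    and f: "\<And>y. f y \<le> (\<Sum>k. ennreal (c k) * indicator (ball w (r k)) y)"
  shows "(\<integral>\<^sup>+y. f y \<partial>\<mu>) \<le> (\<Sum>k. ennreal (c k * (A * r k powr t)))"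
proof -
  have "(\<integral>\<^sup>+y. f y \<partial>\<mu>) \<le> (\<integral>\<^sup>+y. (\<Sum>k. ennreal (c k) * indicator (ball w (r k)) y) \<partial>\<mu>)"
    by (intro nn_integral_mono f)
  also have "\<dots> = (\<Sum>k. \<integral>\<^sup>+y. ennreal (c k) * indicator (ball w (r k)) y \<partial>\<mu>)"
  proof (rule nn_integral_suminf)
    show "(\<lambda>y. ennreal (c k) * indicator (ball w (r k)) y) \<in> borel_measurable \<mu>" for k
      unfolding measurable_cong_sets[OF sets refl] by measurable
  qed
  also have "\<dots> = (\<Sum>k. ennreal (c k) * emeasure \<mu> (ball w (r k)))"
    using sets by (simp add: nn_integral_cmult_indicator)
  also have "\<dots> \<le> (\<Sum>k. ennreal (c k * (A * r k powr t)))"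
    using ball r c by (intro suminf_le) (auto simp: ennreal_mult' intro: mult_left_mono)
  finally show ?thesis .
qed

lemma singular_powr_le_dyadic_sum:
  assumes "0 < g" "0 < R"
  shows "singular_powr g (dist y w) * indicator (ball w R) y
    \<le> (\<Sum>k. ennreal ((R / 2 ^ Suc k) powr -g) * indicator (ball w (R / 2 ^ k)) y)"
proof (cases "dist y w = 0")
  case True
  have "ennreal (R powr -g) \<le> ennreal ((R / 2 ^ Suc k) powr -g) * indicator (ball w (R / 2 ^ k)) y"
    for k
  proof -
    have "R powr -g \<le> (R / 2 ^ Suc k) powr -g"
      using assms one_le_power[of "2::real" "Suc k"] by (intro powr_mono2') (auto simp: field_simps)
    then show ?thesis using True assms by (simp add: ennreal_leI dist_commute)
  qed
  then have "(\<Sum>k::nat. ennreal (R powr -g))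
      \<le> (\<Sum>k. ennreal ((R / 2 ^ Suc k) powr -g) * indicator (ball w (R / 2 ^ k)) y)"
    by (rule suminf_le[OF _ summableI summableI])
  moreover have "(\<Sum>k::nat. ennreal (R powr -g)) = \<infinity>"
    using assms by (intro suminf_ennreal_const_top) simp
  ultimately show ?thesis by (simp add: top_unique)
next
  case False
  show ?thesis
  proof (cases "dist y w < R")
    case True
    obtain k :: nat where k: "2 ^ k < R / dist y w" "R / dist y w \<le> 2 ^ Suc k"
      using dyadic_interval_less_le[of "R / dist y w"] True False by auto
    have "R / 2 ^ Suc k \<le> dist y w"
      using k(2) False by (simp add: pos_divide_le_eq mult.commute del: power_Suc)
    then have "dist y w powr -g \<le> (R / 2 ^ Suc k) powr -g"
      using assms by (intro powr_mono2') auto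
    moreover have "dist y w < R / 2 ^ k"
      using k(1) False by (simp add: pos_less_divide_eq mult.commute)
    ultimately have "singular_powr g (dist y w) * indicator (ball w R) y
        \<le> ennreal ((R / 2 ^ Suc k) powr -g) * indicator (ball w (R / 2 ^ k)) y"
      using True False by (simp add: singular_powr_def ennreal_leI dist_commute)
    also have "\<dots> \<le> (\<Sum>k. ennreal ((R / 2 ^ Suc k) powr -g) * indicator (ball w (R / 2 ^ k)) y)"
      by (rule ennreal_le_suminf)
    finally show ?thesis .
  qed (simp add: dist_commute)
qed

lemma powr_outside_ball_le_dyadic_sum:
  assumes "0 < b" "0 < R"
  shows "ennreal (dist y w powr -b) * indicator (- ball w R) y
    \<le> (\<Sum>k. ennreal ((R * 2 ^ k) powr -b) * indicator (ball w (R * 2 ^ Suc k)) y)"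
proof (cases "R \<le> dist y w")
  case True
  obtain k :: nat where k: "2 ^ k \<le> dist y w / R" "dist y w / R < 2 ^ Suc k"
    using dyadic_interval_le_less[of "dist y w / R"] True assms by auto
  have "R * 2 ^ k \<le> dist y w"
    using k(1) assms by (simp add: pos_le_divide_eq mult.commute)
  then have "dist y w powr -b \<le> (R * 2 ^ k) powr -b"
    using assms by (intro powr_mono2') auto
  moreover have "dist y w < R * 2 ^ Suc k"
    using k(2) assms by (simp add: pos_divide_less_eq mult.commute del: power_Suc)
  ultimately have "ennreal (dist y w powr -b) * indicator (- ball w R) y
      \<le> ennreal ((R * 2 ^ k) powr -b) * indicator (ball w (R * 2 ^ Suc k)) y"
    using True by (simp add: ennreal_leI dist_commute)
  also have "\<dots> \<le> (\<Sum>k. ennreal ((R * 2 ^ k) powr -b) * indicator (ball w (R * 2 ^ Suc k)) y)"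
    by (rule ennreal_le_suminf)
  finally show ?thesis .
qed (simp add: dist_commute)

lemma nn_integral_singular_powr_ball_le:
  fixes \<mu> :: "'a::metric_space measure"
  assumes "sets \<mu> = sets borel" and "0 \<le> A"
    and "\<And>r. 0 < r \<Longrightarrow> emeasure \<mu> (ball w r) \<le> ennreal (A * r powr t)"
    and "0 < g" "g < t" "0 < R"
  shows "(\<integral>\<^sup>+y. singular_powr g (dist y w) * indicator (ball w R) y \<partial>\<mu>)
    \<le> ennreal (A * 2 powr g * R powr (t - g) / (1 - 2 powr (g - t)))"
proof -
  have "(\<integral>\<^sup>+y. singular_powr g (dist y w) * indicator (ball w R) y \<partial>\<mu>)
      \<le> (\<Sum>k. ennreal ((R / 2 ^ Suc k) powr -g * (A * (R / 2 ^ k) powr t)))"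
    using assms
    by (intro nn_integral_le_suminf_balls[OF _ _ _ _ singular_powr_le_dyadic_sum]) auto
  also have "\<dots> = (\<Sum>k. ennreal (A * 2 powr g * R powr (t - g) * (2 powr (g - t)) ^ k))"
  proof -
    have summand: "(R / 2 ^ Suc k) powr -g * (A * (R / 2 ^ k) powr t)
        = A * 2 powr g * R powr (t - g) * (2 powr (g - t)) ^ k" for k
      using \<open>0 < R\<close> by (simp add: powr_divide powr_mult powr_realpow[symmetric] powr_powr
          powr_add[symmetric] powr_diff field_simps flip: powr_power)
    show ?thesis by (simp only: summand)
  qed
  also have "\<dots> = ennreal (A * 2 powr g * R powr (t - g) / (1 - 2 powr (g - t)))"
    using assms by (intro suminf_ennreal_geometric) (auto intro!: powr_less_one)
  finally show ?thesis .
qed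

lemma nn_integral_powr_outside_ball_le:
  fixes \<mu> :: "'a::metric_space measure"
  assumes "sets \<mu> = sets borel" and "0 \<le> A"
    and "\<And>r. 0 < r \<Longrightarrow> emeasure \<mu> (ball w r) \<le> ennreal (A * r powr t)"
    and "0 \<le> t" "t < b" "0 < R"
  shows "(\<integral>\<^sup>+y. ennreal (dist y w powr -b) * indicator (- ball w R) y \<partial>\<mu>)
    \<le> ennreal (A * 2 powr t * R powr (t - b) / (1 - 2 powr (t - b)))"
proof -
  have "(\<integral>\<^sup>+y. ennreal (dist y w powr -b) * indicator (- ball w R) y \<partial>\<mu>)
      \<le> (\<Sum>k. ennreal ((R * 2 ^ k) powr -b * (A * (R * 2 ^ Suc k) powr t)))"
    using assms
    by (intro nn_integral_le_suminf_balls[OF _ _ _ _ powr_outside_ball_le_dyadic_sum]) auto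
  also have "\<dots> = (\<Sum>k. ennreal (A * 2 powr t * R powr (t - b) * (2 powr (t - b)) ^ k))"
  proof -
    have summand: "(R * 2 ^ k) powr -b * (A * (R * 2 ^ Suc k) powr t)
        = A * 2 powr t * R powr (t - b) * (2 powr (t - b)) ^ k" for k
      using \<open>0 < R\<close> by (simp add: powr_divide powr_mult powr_realpow[symmetric] powr_powr
          powr_add[symmetric] powr_diff field_simps flip: powr_power)
    show ?thesis by (simp only: summand)
  qed
  also have "\<dots> = ennreal (A * 2 powr t * R powr (t - b) / (1 - 2 powr (t - b)))"
    using assms by (intro suminf_ennreal_geometric) (auto intro!: powr_less_one)
  finally show ?thesis .
qed

lemma singular_powr_potential_bounded:
  fixes \<nu> :: "'a::metric_space measure"
  assumes sets: "sets \<nu> = sets borel" and "finite_measure \<nu>" and "0 \<le> A"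
    and ball: "\<And>w r. 0 < r \<Longrightarrow> emeasure \<nu> (ball w r) \<le> ennreal (A * r powr t)"
    and "0 < g" "g < t"
  shows "\<exists>L\<ge>0. \<forall>w. (\<integral>\<^sup>+w'. singular_powr g (dist w w') \<partial>\<nu>) \<le> ennreal L"
proof -
  interpret finite_measure \<nu> by fact
  define N where "N = A * 2 powr g / (1 - 2 powr (g - t))"
  have "2 powr (g - t) < 1" using assms by (auto intro: powr_less_one)
  then have "0 \<le> N" using assms by (simp add: N_def)
  have "(\<integral>\<^sup>+w'. singular_powr g (dist w w') \<partial>\<nu>) \<le> ennreal (N + measure \<nu> (space \<nu>))" for w
  proof -
    have near_or_far: "singular_powr g (dist w w')
        \<le> singular_powr g (dist w' w) * indicator (ball w 1) w' + 1" for w'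
    proof (cases "dist w w' < 1")
      case False
      then have "dist w w' powr -g \<le> 1"
        using ge_one_powr_ge_zero[of "dist w w'" g] \<open>0 < g\<close>
        by (simp add: powr_minus_divide divide_le_eq_1)
      moreover have "w \<noteq> w'" using False by auto
      ultimately show ?thesis using False by (simp add: singular_powr_def)
    qed (simp add: dist_commute)
    have "(\<integral>\<^sup>+w'. singular_powr g (dist w w') \<partial>\<nu>)
        \<le> (\<integral>\<^sup>+w'. singular_powr g (dist w' w) * indicator (ball w 1) w' + 1 \<partial>\<nu>)"
      by (intro nn_integral_mono near_or_far)
    also have "\<dots> = (\<integral>\<^sup>+w'. singular_powr g (dist w' w) * indicator (ball w 1) w' \<partial>\<nu>)
        + emeasure \<nu> (space \<nu>)"
      by (subst nn_integral_add) (simp_all add: measurable_cong_sets[OF sets refl])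
    also have "\<dots> \<le> ennreal N + ennreal (measure \<nu> (space \<nu>))"
      using nn_integral_singular_powr_ball_le[OF sets \<open>0 \<le> A\<close> ball, of g 1] assms
      by (intro add_mono) (auto simp: N_def emeasure_eq_measure)
    also have "\<dots> = ennreal (N + measure \<nu> (space \<nu>))"
      using \<open>0 \<le> N\<close> by simp
    finally show ?thesis .
  qed
  moreover have "0 \<le> N + measure \<nu> (space \<nu>)" using \<open>0 \<le> N\<close> by simp
  ultimately show ?thesis by blast
qed

section \<open>Composition of Riesz kernels\<close>

text \<open>
  If \<open>dist y z = 2h\<close>, then \<open>|x - y|^(-p) |x - z|^(-p) \<le> split_kernel p h y x + split_kernel p h z x\<close>:
  only the factor of the closer centre can be singular, and the other one is at most \<open>h^(-p)\<close>.
\<close>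

definition split_kernel :: "real \<Rightarrow> real \<Rightarrow> 'a::metric_space \<Rightarrow> 'a \<Rightarrow> ennreal" where
  "split_kernel p h y x =
     ennreal (h powr -p) * (singular_powr p (dist x y) * indicator (ball y h) x)
   + ennreal (dist x y powr -(2 * p)) * indicator (- ball y h) x"

lemma split_kernel_measurable[measurable]:
  "split_kernel p h y \<in> borel_measurable borel"
  unfolding split_kernel_def[abs_def] by measurable

lemma powr_mult_powr_le_split_kernel_real:
  fixes u v h p :: real
  assumes "0 < u" "u \<le> v" "2 * h \<le> u + v" "0 < h" "0 < p"
  shows "u powr -p * v powr -p \<le> (if u < h then h powr -p * u powr -p else u powr -(2 * p))"
proof (cases "u < h")
  case True
  then have "v powr -p \<le> h powr -p" using assms by (intro powr_mono2') auto
  then have "u powr -p * v powr -p \<le> u powr -p * h powr -p" by (simp add: mult_left_mono)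
  then show ?thesis using True by (simp add: mult.commute)
next
  case False
  then have "v powr -p \<le> u powr -p" using assms by (intro powr_mono2') auto
  then have "u powr -p * v powr -p \<le> u powr -p * u powr -p" by (simp add: mult_left_mono)
  then show ?thesis using False assms by (simp add: powr_add[symmetric])
qed

lemma powr_mult_powr_le_split_kernel:
  fixes x y z :: "'a::metric_space"
  assumes "dist y z = 2 * h" "0 < h" "0 < p"
  shows "ennreal (dist x y powr -p) * ennreal (dist x z powr -p)
    \<le> split_kernel p h y x + split_kernel p h z x"
proof -
  have closer: "ennreal (dist x y powr -p) * ennreal (dist x z powr -p) \<le> split_kernel p h y x"
    if "dist x y \<le> dist x z" "dist y z = 2 * h" for y z
  proof (cases "dist x y = 0")
    case False
    have "2 * h \<le> dist x y + dist x z"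
      using that dist_triangle[of y z x] by (simp add: dist_commute)
    then have "dist x y powr -p * dist x z powr -p
        \<le> (if dist x y < h then h powr -p * dist x y powr -p else dist x y powr -(2 * p))"
      using False that assms by (intro powr_mult_powr_le_split_kernel_real) auto
    then have "ennreal (dist x y powr -p * dist x z powr -p) \<le> split_kernel p h y x"
      using False by (cases "dist x y < h")
        (auto simp: split_kernel_def singular_powr_def dist_commute ennreal_mult'[symmetric]
          intro: ennreal_leI)
    then show ?thesis by (simp add: ennreal_mult')
  qed simp
  show ?thesis
  proof (cases "dist x y \<le> dist x z")
    case True
    then show ?thesis using closer[of y z] assms by (simp add: add_increasing2)
  next
    case False
    then show ?thesis
      using closer[of z y] assms by (simp add: dist_commute mult.commute add_increasing)
  qed
qed

lemma nn_integral_split_kernel_le: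
  fixes \<mu> :: "'a::metric_space measure"
  assumes sets: "sets \<mu> = sets borel" and "0 \<le> A"
    and ball: "\<And>w r. 0 < r \<Longrightarrow> emeasure \<mu> (ball w r) \<le> ennreal (A * r powr t)"
    and "0 < p" "p < t" "t < 2 * p" "0 < h"
  shows "(\<integral>\<^sup>+x. split_kernel p h y x \<partial>\<mu>)
    \<le> ennreal ((A * 2 powr p / (1 - 2 powr (p - t)) + A * 2 powr t / (1 - 2 powr (t - 2 * p)))
               * h powr (t - 2 * p))"
proof -
  have q: "2 powr (p - t) < 1" "2 powr (t - 2 * p) < 1" using assms by (auto intro: powr_less_one)
  have "(\<integral>\<^sup>+x. split_kernel p h y x \<partial>\<mu>)
      = (\<integral>\<^sup>+x. ennreal (h powr -p) * (singular_powr p (dist x y) * indicator (ball y h) x) \<partial>\<mu>)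
      + (\<integral>\<^sup>+x. ennreal (dist x y powr -(2 * p)) * indicator (- ball y h) x \<partial>\<mu>)"
    unfolding split_kernel_def
    by (rule nn_integral_add) (simp_all add: measurable_cong_sets[OF sets refl])
  also have "\<dots> = ennreal (h powr -p) * (\<integral>\<^sup>+x. singular_powr p (dist x y) * indicator (ball y h) x \<partial>\<mu>)
      + (\<integral>\<^sup>+x. ennreal (dist x y powr -(2 * p)) * indicator (- ball y h) x \<partial>\<mu>)"
    by (subst nn_integral_cmult) (simp_all add: measurable_cong_sets[OF sets refl])
  also have "\<dots> \<le> ennreal (h powr -p) * ennreal (A * 2 powr p * h powr (t - p) / (1 - 2 powr (p - t)))
      + ennreal (A * 2 powr t * h powr (t - 2 * p) / (1 - 2 powr (t - 2 * p)))"
  proof (intro add_mono mult_left_mono)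
    show "(\<integral>\<^sup>+x. singular_powr p (dist x y) * indicator (ball y h) x \<partial>\<mu>)
        \<le> ennreal (A * 2 powr p * h powr (t - p) / (1 - 2 powr (p - t)))"
      using assms by (intro nn_integral_singular_powr_ball_le) auto
    show "(\<integral>\<^sup>+x. ennreal (dist x y powr -(2 * p)) * indicator (- ball y h) x \<partial>\<mu>)
        \<le> ennreal (A * 2 powr t * h powr (t - 2 * p) / (1 - 2 powr (t - 2 * p)))"
      using assms by (intro nn_integral_powr_outside_ball_le) auto
  qed simp
  also have "\<dots> = ennreal ((A * 2 powr p / (1 - 2 powr (p - t)) + A * 2 powr t / (1 - 2 powr (t - 2 * p)))
               * h powr (t - 2 * p))"
  proof -
    have "h powr -p * h powr (t - p) = h powr (t - 2 * p)"
      by (simp add: powr_add[symmetric])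
    then have "h powr -p * (A * 2 powr p * h powr (t - p) / (1 - 2 powr (p - t)))
        = A * 2 powr p / (1 - 2 powr (p - t)) * h powr (t - 2 * p)"
      by (simp add: field_simps)
    then show ?thesis
      using assms q
      by (simp add: ennreal_mult'[symmetric] ennreal_plus[symmetric] distrib_right del: ennreal_plus)
  qed
  finally show ?thesis .
qed

lemma riesz_kernel_composition:
  fixes \<mu> :: "'a::metric_space measure"
  assumes sets: "sets \<mu> = sets borel" and "0 < A"
    and ball: "\<And>w r. 0 < r \<Longrightarrow> emeasure \<mu> (ball w r) \<le> ennreal (A * r powr t)"
    and "0 < p" "p < t" "t < 2 * p"
  shows "\<exists>K>0. \<forall>y z. (\<integral>\<^sup>+x. ennreal (dist x y powr -p) * ennreal (dist x z powr -p) \<partial>\<mu>)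
                    \<le> ennreal K * singular_powr (2 * p - t) (dist y z)"
proof -
  define K0 where
    "K0 = A * 2 powr p / (1 - 2 powr (p - t)) + A * 2 powr t / (1 - 2 powr (t - 2 * p))"
  have "2 powr (p - t) < 1" "2 powr (t - 2 * p) < 1" using assms by (auto intro: powr_less_one)
  then have "K0 > 0" using \<open>0 < A\<close> unfolding K0_def by (intro add_pos_pos divide_pos_pos) auto
  have "(\<integral>\<^sup>+x. ennreal (dist x y powr -p) * ennreal (dist x z powr -p) \<partial>\<mu>)
      \<le> ennreal (2 * K0 * 2 powr (2 * p - t)) * singular_powr (2 * p - t) (dist y z)" for y z
  proof (cases "y = z")
    case True
    then show ?thesis using \<open>K0 > 0\<close> by (simp add: singular_powr_def ennreal_mult_top)
  next
    case False
    define h where "h = dist y z / 2"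
    have h: "0 < h" "dist y z = 2 * h" using False by (auto simp: h_def)
    have "(\<integral>\<^sup>+x. ennreal (dist x y powr -p) * ennreal (dist x z powr -p) \<partial>\<mu>)
        \<le> (\<integral>\<^sup>+x. split_kernel p h y x + split_kernel p h z x \<partial>\<mu>)"
      using h assms by (intro nn_integral_mono powr_mult_powr_le_split_kernel) auto
    also have "\<dots> = (\<integral>\<^sup>+x. split_kernel p h y x \<partial>\<mu>) + (\<integral>\<^sup>+x. split_kernel p h z x \<partial>\<mu>)"
      by (rule nn_integral_add) (simp_all add: measurable_cong_sets[OF sets refl])
    also have "\<dots> \<le> ennreal (K0 * h powr (t - 2 * p)) + ennreal (K0 * h powr (t - 2 * p))"
      unfolding K0_def using assms h by (intro add_mono nn_integral_split_kernel_le) auto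
    also have "\<dots> = ennreal (2 * K0 * 2 powr (2 * p - t)) * singular_powr (2 * p - t) (dist y z)"
    proof -
      have "h powr (t - 2 * p) = dist y z powr (t - 2 * p) / 2 powr (t - 2 * p)"
        by (simp add: h_def powr_divide)
      also have "\<dots> = 2 powr (2 * p - t) * dist y z powr -(2 * p - t)"
        using powr_minus_divide[of 2 "t - 2 * p"] by (simp add: field_simps)
      finally have "K0 * h powr (t - 2 * p) + K0 * h powr (t - 2 * p)
          = 2 * K0 * 2 powr (2 * p - t) * dist y z powr -(2 * p - t)"
        by simp
      then have "ennreal (K0 * h powr (t - 2 * p)) + ennreal (K0 * h powr (t - 2 * p))
          = ennreal (2 * K0 * 2 powr (2 * p - t)) * ennreal (dist y z powr -(2 * p - t))"
        using \<open>K0 > 0\<close>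
        by (simp add: ennreal_plus[symmetric] ennreal_mult'[symmetric] del: ennreal_plus)
      then show ?thesis
        using h by (simp add: singular_powr_def)
    qed
    finally show ?thesis .
  qed
  moreover have "0 < 2 * K0 * 2 powr (2 * p - t)" using \<open>K0 > 0\<close> by simp
  ultimately show ?thesis by blast
qed

section \<open>Averaging the kernel over small balls\<close>

definition cball_interaction :: "'a::metric_space measure \<Rightarrow> real \<Rightarrow> real \<Rightarrow> 'a \<Rightarrow> 'a \<Rightarrow> ennreal" where
  "cball_interaction \<mu> g \<delta> w w' =
     (\<integral>\<^sup>+y. \<integral>\<^sup>+z. indicator (cball w \<delta>) y * indicator (cball w' \<delta>) z
        * singular_powr g (dist y z) \<partial>\<mu> \<partial>\<mu>)"

lemma nn_integral_singular_powr_separated_cballs_le: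
  fixes \<mu> :: "'a::metric_space measure"
  assumes sets: "sets \<mu> = sets borel" and "0 \<le> A"
    and cball: "\<And>x r. 0 < r \<Longrightarrow> emeasure \<mu> (cball x r) \<le> ennreal (A * r powr t)"
    and "0 < g" "0 < \<delta>" "4 * \<delta> \<le> dist w w'"
  shows "cball_interaction \<mu> g \<delta> w w'
    \<le> ennreal (2 powr g * A\<^sup>2 * \<delta> powr (2 * t) * dist w w' powr -g)"
proof -
  define c where "c = 2 powr g * dist w w' powr -g"
  have kernel: "indicator (cball w \<delta>) y * indicator (cball w' \<delta>) z * singular_powr g (dist y z)
      \<le> ennreal c * indicator (cball w \<delta>) y * indicator (cball w' \<delta>) z" for y z
  proof (cases "y \<in> cball w \<delta> \<and> z \<in> cball w' \<delta>")
    case True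
    then have "dist w y \<le> \<delta>" "dist w' z \<le> \<delta>" by auto
    then have half: "dist w w' / 2 \<le> dist y z"
      using assms dist_triangle[of w w' y] dist_triangle[of y w' z] by (simp add: dist_commute)
    have "0 < dist w w'" using assms by linarith
    then have "0 < dist y z" using half by linarith
    moreover have "dist y z powr -g \<le> (dist w w' / 2) powr -g"
      using half \<open>0 < dist w w'\<close> \<open>0 < g\<close> by (intro powr_mono2') auto
    moreover have "(dist w w' / 2) powr -g = c"
      by (simp add: c_def powr_divide powr_minus_divide field_simps)
    ultimately show ?thesis using True by (simp add: singular_powr_def ennreal_leI)
  qed auto
  have "cball_interaction \<mu> g \<delta> w w'
      \<le> (\<integral>\<^sup>+y. \<integral>\<^sup>+z. ennreal c * indicator (cball w \<delta>) y * indicator (cball w' \<delta>) z \<partial>\<mu> \<partial>\<mu>)"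
    unfolding cball_interaction_def by (intro nn_integral_mono kernel)
  also have "\<dots> = (\<integral>\<^sup>+y. (ennreal c * emeasure \<mu> (cball w' \<delta>)) * indicator (cball w \<delta>) y \<partial>\<mu>)"
  proof (rule nn_integral_cong)
    fix y
    have "(\<integral>\<^sup>+z. (ennreal c * indicator (cball w \<delta>) y) * indicator (cball w' \<delta>) z \<partial>\<mu>)
        = ennreal c * indicator (cball w \<delta>) y * emeasure \<mu> (cball w' \<delta>)"
      using sets by (intro nn_integral_cmult_indicator) simp
    then show "(\<integral>\<^sup>+z. ennreal c * indicator (cball w \<delta>) y * indicator (cball w' \<delta>) z \<partial>\<mu>)
        = (ennreal c * emeasure \<mu> (cball w' \<delta>)) * indicator (cball w \<delta>) y"
      by (simp add: mult_ac)
  qed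
  also have "\<dots> = ennreal c * emeasure \<mu> (cball w \<delta>) * emeasure \<mu> (cball w' \<delta>)"
    using sets nn_integral_cmult_indicator[of "cball w \<delta>" \<mu> "ennreal c * emeasure \<mu> (cball w' \<delta>)"]
    by (simp add: mult_ac)
  also have "\<dots> \<le> ennreal c * ennreal (A * \<delta> powr t) * ennreal (A * \<delta> powr t)"
    using assms by (intro mult_mono) auto
  also have "\<dots> = ennreal (2 powr g * A\<^sup>2 * \<delta> powr (2 * t) * dist w w' powr -g)"
    using assms by (simp add: c_def ennreal_mult'[symmetric] power2_eq_square powr_add[symmetric]
        mult_ac)
  finally show ?thesis .
qed

lemma nn_integral_singular_powr_close_cballs_le:
  fixes \<mu> :: "'a::metric_space measure"
  assumes sets: "sets \<mu> = sets borel" and "0 \<le> A"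
    and cball: "\<And>x r. 0 < r \<Longrightarrow> emeasure \<mu> (cball x r) \<le> ennreal (A * r powr t)"
    and "0 < g" "g < t" "0 < \<delta>" "dist w w' < 4 * \<delta>"
  shows "cball_interaction \<mu> g \<delta> w w'
    \<le> ennreal (A\<^sup>2 * 2 powr g * 6 powr (t - g) / (1 - 2 powr (g - t)) * \<delta> powr (2 * t - g))"
proof -
  define N where "N = A * 2 powr g * (6 * \<delta>) powr (t - g) / (1 - 2 powr (g - t))"
  have q: "2 powr (g - t) < 1" using assms by (auto intro: powr_less_one)
  have ball: "emeasure \<mu> (ball x r) \<le> ennreal (A * r powr t)" if "0 < r" for x r
    using sets by (intro order_trans[OF emeasure_mono[OF ball_subset_cball] cball[OF that]]) simp
  have kernel: "indicator (cball w \<delta>) y * indicator (cball w' \<delta>) z * singular_powr g (dist y z)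
      \<le> indicator (cball w \<delta>) y * (singular_powr g (dist z y) * indicator (ball y (6 * \<delta>)) z)"
    for y z
  proof (cases "y \<in> cball w \<delta> \<and> z \<in> cball w' \<delta>")
    case True
    then have "dist y z < 6 * \<delta>"
      using assms dist_triangle[of y z w] dist_triangle[of w z w'] by (simp add: dist_commute)
    then show ?thesis using True by (simp add: dist_commute)
  qed auto
  have "cball_interaction \<mu> g \<delta> w w'
      \<le> (\<integral>\<^sup>+y. \<integral>\<^sup>+z. indicator (cball w \<delta>) y *
            (singular_powr g (dist z y) * indicator (ball y (6 * \<delta>)) z) \<partial>\<mu> \<partial>\<mu>)"
    unfolding cball_interaction_def by (intro nn_integral_mono kernel)
  also have "\<dots> = (\<integral>\<^sup>+y. indicator (cball w \<delta>) y *
      (\<integral>\<^sup>+z. singular_powr g (dist z y) * indicator (ball y (6 * \<delta>)) z \<partial>\<mu>) \<partial>\<mu>)"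
    by (simp add: nn_integral_cmult measurable_cong_sets[OF sets refl])
  also have "\<dots> \<le> (\<integral>\<^sup>+y. ennreal N * indicator (cball w \<delta>) y \<partial>\<mu>)"
  proof (rule nn_integral_mono)
    fix y
    have "(\<integral>\<^sup>+z. singular_powr g (dist z y) * indicator (ball y (6 * \<delta>)) z \<partial>\<mu>) \<le> ennreal N"
      unfolding N_def using assms
      by (intro nn_integral_singular_powr_ball_le[OF sets \<open>0 \<le> A\<close> ball]) auto
    then show "indicator (cball w \<delta>) y
        * (\<integral>\<^sup>+z. singular_powr g (dist z y) * indicator (ball y (6 * \<delta>)) z \<partial>\<mu>)
        \<le> ennreal N * indicator (cball w \<delta>) y"
      by (auto simp: split: split_indicator)
  qed
  also have "\<dots> \<le> ennreal N * ennreal (A * \<delta> powr t)"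
    using sets cball[OF \<open>0 < \<delta>\<close>] by (simp add: nn_integral_cmult_indicator mult_left_mono)
  also have "\<dots>
      = ennreal (A\<^sup>2 * 2 powr g * 6 powr (t - g) / (1 - 2 powr (g - t)) * \<delta> powr (2 * t - g))"
  proof -
    have "(6 * \<delta>) powr (t - g) * \<delta> powr t = 6 powr (t - g) * \<delta> powr (2 * t - g)"
      using assms by (simp add: powr_mult powr_add[symmetric])
    then show ?thesis
      using assms q by (simp add: N_def ennreal_mult'[symmetric] power2_eq_square field_simps)
  qed
  finally show ?thesis .
qed

lemma nn_integral_singular_powr_cballs_le:
  fixes \<mu> :: "'a::metric_space measure"
  assumes sets: "sets \<mu> = sets borel" and "0 < A"
    and cball: "\<And>x r. 0 < r \<Longrightarrow> emeasure \<mu> (cball x r) \<le> ennreal (A * r powr t)"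
    and "0 < g" "g < t"
  shows "\<exists>K>0. \<forall>\<delta>>0. \<forall>w w'.
    cball_interaction \<mu> g \<delta> w w' \<le> ennreal (K * \<delta> powr (2 * t)) * singular_powr g (dist w w')"
proof -
  define C where "C = A\<^sup>2 * 2 powr g * 6 powr (t - g) / (1 - 2 powr (g - t))"
  define K where "K = 2 powr g * A\<^sup>2 + C * 4 powr g"
  have "2 powr (g - t) < 1" using assms by (auto intro: powr_less_one)
  then have "0 < C" using assms by (simp add: C_def)
  then have "0 < K" using assms by (simp add: K_def add_pos_pos)
  have "cball_interaction \<mu> g \<delta> w w' \<le> ennreal (K * \<delta> powr (2 * t)) * singular_powr g (dist w w')"
    if "0 < \<delta>" for \<delta> and w w' :: 'a
  proof (cases "w = w'")
    case True
    then show ?thesis using \<open>0 < K\<close> \<open>0 < \<delta>\<close> by (simp add: singular_powr_def ennreal_mult_top)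
  next
    case False
    then have D: "0 < dist w w'" by simp
    have "cball_interaction \<mu> g \<delta> w w' \<le> ennreal (K * \<delta> powr (2 * t) * dist w w' powr -g)"
    proof (cases "4 * \<delta> \<le> dist w w'")
      case True
      have "cball_interaction \<mu> g \<delta> w w'
          \<le> ennreal (2 powr g * A\<^sup>2 * \<delta> powr (2 * t) * dist w w' powr -g)"
        using assms \<open>0 < \<delta>\<close> True
        by (intro nn_integral_singular_powr_separated_cballs_le[OF sets _ cball]) auto
      also have "\<dots> \<le> ennreal (K * \<delta> powr (2 * t) * dist w w' powr -g)"
        using \<open>0 < C\<close> by (intro ennreal_leI mult_right_mono) (auto simp: K_def)
      finally show ?thesis .
    next
      case False
      have "cball_interaction \<mu> g \<delta> w w' \<le> ennreal (C * \<delta> powr (2 * t - g))"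
        unfolding C_def using assms \<open>0 < \<delta>\<close> False
        by (intro nn_integral_singular_powr_close_cballs_le[OF sets _ cball]) auto
      also have "\<dots> \<le> ennreal (K * \<delta> powr (2 * t) * dist w w' powr -g)"
      proof (rule ennreal_leI)
        have "\<delta> powr -g \<le> (dist w w' / 4) powr -g"
          using False D \<open>0 < g\<close> by (intro powr_mono2') auto
        also have "\<dots> = 4 powr g * dist w w' powr -g"
          using D by (simp add: powr_divide powr_minus_divide field_simps)
        finally have "C * (\<delta> powr (2 * t) * \<delta> powr -g)
            \<le> C * (\<delta> powr (2 * t) * (4 powr g * dist w w' powr -g))"
          using \<open>0 < C\<close> by (intro mult_left_mono) auto
        then have "C * \<delta> powr (2 * t - g) \<le> C * 4 powr g * \<delta> powr (2 * t) * dist w w' powr -g"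
          by (simp add: powr_add[symmetric] mult_ac)
        also have "\<dots> \<le> K * \<delta> powr (2 * t) * dist w w' powr -g"
          using assms by (intro mult_right_mono) (auto simp: K_def)
        finally show "C * \<delta> powr (2 * t - g) \<le> K * \<delta> powr (2 * t) * dist w w' powr -g" .
      qed
      finally show ?thesis .
    qed
    then show ?thesis
      using D \<open>0 < K\<close> by (simp add: singular_powr_def ennreal_mult')
  qed
  then show ?thesis using \<open>0 < K\<close> by blast
qed

section \<open>Rearranging iterated integrals\<close>

lemma nn_integral_mult_nn_integral_swap:
  fixes f g :: "'a \<Rightarrow> 'b \<Rightarrow> ennreal"
  assumes M: "sigma_finite_measure M" and N: "sigma_finite_measure N"
    and [measurable]: "case_prod f \<in> borel_measurable (M \<Otimes>\<^sub>M N)"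
      "case_prod g \<in> borel_measurable (M \<Otimes>\<^sub>M N)"
  shows "(\<integral>\<^sup>+x. (\<integral>\<^sup>+y. f x y \<partial>N) * (\<integral>\<^sup>+z. g x z \<partial>N) \<partial>M)
    = (\<integral>\<^sup>+y. \<integral>\<^sup>+z. \<integral>\<^sup>+x. f x y * g x z \<partial>M \<partial>N \<partial>N)"
proof -
  interpret MN: pair_sigma_finite M N using M N by (simp add: pair_sigma_finite_def)
  have "(\<integral>\<^sup>+x. (\<integral>\<^sup>+y. f x y \<partial>N) * (\<integral>\<^sup>+z. g x z \<partial>N) \<partial>M)
      = (\<integral>\<^sup>+x. \<integral>\<^sup>+y. \<integral>\<^sup>+z. f x y * g x z \<partial>N \<partial>N \<partial>M)"
  proof (rule nn_integral_cong)
    fix x assume [measurable]: "x \<in> space M"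
    have [measurable]: "f x \<in> borel_measurable N" "g x \<in> borel_measurable N" by measurable
    show "(\<integral>\<^sup>+y. f x y \<partial>N) * (\<integral>\<^sup>+z. g x z \<partial>N) = (\<integral>\<^sup>+y. \<integral>\<^sup>+z. f x y * g x z \<partial>N \<partial>N)"
      by (simp add: nn_integral_cmult nn_integral_multc[symmetric])
  qed
  also have "\<dots> = (\<integral>\<^sup>+y. \<integral>\<^sup>+x. \<integral>\<^sup>+z. f x y * g x z \<partial>N \<partial>M \<partial>N)"
    by (rule MN.Fubini'[symmetric]) measurable
  also have "\<dots> = (\<integral>\<^sup>+y. \<integral>\<^sup>+z. \<integral>\<^sup>+x. f x y * g x z \<partial>M \<partial>N \<partial>N)"
    by (intro nn_integral_cong MN.Fubini'[symmetric]) measurable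
  finally show ?thesis .
qed

lemma nn_integral_potential_square_le:
  fixes K k :: "'a \<Rightarrow> 'a \<Rightarrow> ennreal"
  assumes M: "sigma_finite_measure M"
    and [measurable]: "case_prod K \<in> borel_measurable (M \<Otimes>\<^sub>M M)"
      "case_prod k \<in> borel_measurable (M \<Otimes>\<^sub>M M)" "m \<in> borel_measurable M"
    and comp: "\<And>y z. y \<in> space M \<Longrightarrow> z \<in> space M \<Longrightarrow> (\<integral>\<^sup>+x. K y x * K z x \<partial>M) \<le> c * k y z"
  shows "(\<integral>\<^sup>+x. (\<integral>\<^sup>+y. m y * K y x \<partial>M)\<^sup>2 \<partial>M) \<le> c * (\<integral>\<^sup>+y. \<integral>\<^sup>+z. m y * m z * k y z \<partial>M \<partial>M)"
proof -
  interpret sigma_finite_measure M by (rule M)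
  have "(\<integral>\<^sup>+x. (\<integral>\<^sup>+y. m y * K y x \<partial>M)\<^sup>2 \<partial>M)
      = (\<integral>\<^sup>+y. \<integral>\<^sup>+z. \<integral>\<^sup>+x. m y * K y x * (m z * K z x) \<partial>M \<partial>M \<partial>M)"
    unfolding power2_eq_square using M by (intro nn_integral_mult_nn_integral_swap) measurable
  also have "\<dots> = (\<integral>\<^sup>+y. \<integral>\<^sup>+z. m y * m z * (\<integral>\<^sup>+x. K y x * K z x \<partial>M) \<partial>M \<partial>M)"
    by (intro nn_integral_cong) (simp add: nn_integral_cmult[symmetric] mult_ac)
  also have "\<dots> \<le> (\<integral>\<^sup>+y. \<integral>\<^sup>+z. c * (m y * m z * k y z) \<partial>M \<partial>M)"
  proof (intro nn_integral_mono)
    fix y z assume "y \<in> space M" "z \<in> space M"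
    then have "m y * m z * (\<integral>\<^sup>+x. K y x * K z x \<partial>M) \<le> m y * m z * (c * k y z)"
      by (intro mult_left_mono comp) auto
    then show "m y * m z * (\<integral>\<^sup>+x. K y x * K z x \<partial>M) \<le> c * (m y * m z * k y z)"
      by (simp add: mult_ac)
  qed
  also have "\<dots> = (\<integral>\<^sup>+y. c * (\<integral>\<^sup>+z. m y * m z * k y z \<partial>M) \<partial>M)"
    by (intro nn_integral_cong nn_integral_cmult) measurable
  also have "\<dots> = c * (\<integral>\<^sup>+y. \<integral>\<^sup>+z. m y * m z * k y z \<partial>M \<partial>M)"
    by (rule nn_integral_cmult) measurable
  finally show ?thesis .
qed

lemma nn_integral_smoothed_energy_le:
  fixes h :: "'a \<Rightarrow> 'b \<Rightarrow> ennreal" and k :: "'a \<Rightarrow> 'a \<Rightarrow> ennreal"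
  assumes M: "sigma_finite_measure M" and N: "sigma_finite_measure N"
    and [measurable]: "case_prod h \<in> borel_measurable (M \<Otimes>\<^sub>M N)"
      "case_prod k \<in> borel_measurable (M \<Otimes>\<^sub>M M)"
    and B: "\<And>w w'. w \<in> space N \<Longrightarrow> w' \<in> space N \<Longrightarrow>
      (\<integral>\<^sup>+y. \<integral>\<^sup>+z. h y w * h z w' * k y z \<partial>M \<partial>M) \<le> B w w'"
  shows "(\<integral>\<^sup>+y. \<integral>\<^sup>+z. (\<integral>\<^sup>+w. h y w \<partial>N) * (\<integral>\<^sup>+w'. h z w' \<partial>N) * k y z \<partial>M \<partial>M)
    \<le> (\<integral>\<^sup>+w. \<integral>\<^sup>+w'. B w w' \<partial>N \<partial>N)"
proof -
  interpret MN: pair_sigma_finite M N using M N by (simp add: pair_sigma_finite_def)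
  have "(\<integral>\<^sup>+y. \<integral>\<^sup>+z. (\<integral>\<^sup>+w. h y w \<partial>N) * (\<integral>\<^sup>+w'. h z w' \<partial>N) * k y z \<partial>M \<partial>M)
      = (\<integral>\<^sup>+y. (\<integral>\<^sup>+w. h y w \<partial>N) * (\<integral>\<^sup>+w'. \<integral>\<^sup>+z. h z w' * k y z \<partial>M \<partial>N) \<partial>M)"
  proof (rule nn_integral_cong)
    fix y assume [measurable]: "y \<in> space M"
    have "(\<integral>\<^sup>+z. (\<integral>\<^sup>+w'. h z w' \<partial>N) * k y z \<partial>M) = (\<integral>\<^sup>+z. \<integral>\<^sup>+w'. h z w' * k y z \<partial>N \<partial>M)"
      by (intro nn_integral_cong nn_integral_multc[symmetric]) measurable
    also have "\<dots> = (\<integral>\<^sup>+w'. \<integral>\<^sup>+z. h z w' * k y z \<partial>M \<partial>N)"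
      by (rule MN.Fubini'[symmetric]) measurable
    finally show "(\<integral>\<^sup>+z. (\<integral>\<^sup>+w. h y w \<partial>N) * (\<integral>\<^sup>+w'. h z w' \<partial>N) * k y z \<partial>M)
        = (\<integral>\<^sup>+w. h y w \<partial>N) * (\<integral>\<^sup>+w'. \<integral>\<^sup>+z. h z w' * k y z \<partial>M \<partial>N)"
      by (simp add: nn_integral_cmult mult.assoc)
  qed
  also have "\<dots> = (\<integral>\<^sup>+w. \<integral>\<^sup>+w'. \<integral>\<^sup>+y. h y w * (\<integral>\<^sup>+z. h z w' * k y z \<partial>M) \<partial>M \<partial>N \<partial>N)"
    using M N by (intro nn_integral_mult_nn_integral_swap) measurable
  also have "\<dots> = (\<integral>\<^sup>+w. \<integral>\<^sup>+w'. \<integral>\<^sup>+y. \<integral>\<^sup>+z. h y w * h z w' * k y z \<partial>M \<partial>M \<partial>N \<partial>N)"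
    by (intro nn_integral_cong) (simp add: nn_integral_cmult[symmetric] mult.assoc)
  also have "\<dots> \<le> (\<integral>\<^sup>+w. \<integral>\<^sup>+w'. B w w' \<partial>N \<partial>N)"
    using B by (intro nn_integral_mono) auto
  finally show ?thesis .
qed

lemma emeasure_cball_eq_nn_integral:
  assumes "sets \<nu> = sets borel"
  shows "emeasure \<nu> (cball y \<delta>) = (\<integral>\<^sup>+w. indicator (cball w \<delta>) y \<partial>\<nu>)"
proof -
  have "(\<integral>\<^sup>+w. indicator (cball w \<delta>) y \<partial>\<nu>) = (\<integral>\<^sup>+w. indicator (cball y \<delta>) w \<partial>\<nu>)"
    by (intro nn_integral_cong) (simp add: indicator_def dist_commute)
  then show ?thesis using assms by simp
qed

lemma borel_measurable_indicator_cball_pair: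
  assumes "sets \<mu> = sets borel" "sets \<nu> = sets borel"
  shows "(\<lambda>(y, w). indicator (cball w \<delta>) y :: ennreal)
    \<in> borel_measurable (\<mu> \<Otimes>\<^sub>M (\<nu> :: 'a::euclidean_space measure))"
  unfolding measurable_cong_sets[OF sets_pair_measure_cong[OF assms] refl]
  by (simp add: indicator_def mem_cball case_prod_beta')

lemma borel_measurable_emeasure_cball:
  fixes \<nu> :: "'a::euclidean_space measure"
  assumes "sigma_finite_measure \<nu>" "sets \<nu> = sets borel"
  shows "(\<lambda>y. emeasure \<nu> (cball y \<delta>)) \<in> borel_measurable borel"
proof -
  interpret sigma_finite_measure \<nu> by fact
  show ?thesis
    unfolding emeasure_cball_eq_nn_integral[OF assms(2)]
    using borel_measurable_indicator_cball_pair[OF sets_lborel assms(2), of \<delta>]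
    by (simp add: measurable_cong_sets[OF sets_lborel refl])
qed

lemma nn_integral_cball_measure_energy_le:
  fixes \<mu> \<nu> :: "'a::euclidean_space measure"
  assumes "sigma_finite_measure \<mu>" and sets_\<mu>: "sets \<mu> = sets borel"
    and "prob_space \<nu>" and sets_\<nu>[measurable_cong]: "sets \<nu> = sets borel"
    and cballs: "\<And>w w'. cball_interaction \<mu> g \<delta> w w' \<le> ennreal K * singular_powr g (dist w w')"
    and potential: "\<And>w. (\<integral>\<^sup>+w'. singular_powr g (dist w w') \<partial>\<nu>) \<le> ennreal L"
    and "0 \<le> K" "0 \<le> L"
  shows "(\<integral>\<^sup>+y. \<integral>\<^sup>+z. emeasure \<nu> (cball y \<delta>) * emeasure \<nu> (cball z \<delta>)
    * singular_powr g (dist y z) \<partial>\<mu> \<partial>\<mu>) \<le> ennreal (K * L)"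
proof -
  interpret prob_space \<nu> by fact
  have "(\<lambda>(y, w). indicator (cball w \<delta>) y :: ennreal) \<in> borel_measurable (\<mu> \<Otimes>\<^sub>M \<nu>)"
    using sets_\<mu> sets_\<nu> by (rule borel_measurable_indicator_cball_pair)
  moreover have "(\<lambda>(y, z). singular_powr g (dist y z)) \<in> borel_measurable (\<mu> \<Otimes>\<^sub>M \<mu>)"
    unfolding measurable_cong_sets[OF sets_pair_measure_cong[OF sets_\<mu> sets_\<mu>] refl]
    by measurable
  ultimately have "(\<integral>\<^sup>+y. \<integral>\<^sup>+z. emeasure \<nu> (cball y \<delta>) * emeasure \<nu> (cball z \<delta>)
      * singular_powr g (dist y z) \<partial>\<mu> \<partial>\<mu>)
      \<le> (\<integral>\<^sup>+w. \<integral>\<^sup>+w'. ennreal K * singular_powr g (dist w w') \<partial>\<nu> \<partial>\<nu>)"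
    unfolding emeasure_cball_eq_nn_integral[OF sets_\<nu>]
    using assms cballs[unfolded cball_interaction_def] sigma_finite_measure_axioms
    by (intro nn_integral_smoothed_energy_le) auto
  also have "\<dots> \<le> (\<integral>\<^sup>+w. ennreal K * ennreal L \<partial>\<nu>)"
    using potential by (intro nn_integral_mono) (simp add: nn_integral_cmult mult_left_mono)
  also have "\<dots> = ennreal (K * L)"
    using \<open>0 \<le> K\<close> by (simp add: emeasure_space_1 ennreal_mult')
  finally show ?thesis .
qed

section \<open>The mollified Riesz potential\<close>

lemma smooth_fun_continuous: "smooth_fun f \<Longrightarrow> continuous_on UNIV f"
  by (auto elim: smooth_fun.cases
      intro: continuous_at_imp_continuous_on differentiable_imp_continuous_within)

lemma compactly_supported_bounded:
  fixes \<rho> :: "'a::euclidean_space \<Rightarrow> real"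
  assumes "continuous_on UNIV \<rho>" "\<forall>x. norm x > 1 \<longrightarrow> \<rho> x = 0"
  obtains M where "\<And>x. \<rho> x \<le> M"
proof -
  have "compact (\<rho> ` cball 0 1)"
    using assms(1)
    by (intro compact_continuous_image compact_cball) (auto intro: continuous_on_subset)
  then obtain B where "\<forall>y\<in>\<rho> ` cball 0 1. norm y \<le> B"
    using compact_imp_bounded bounded_iff by metis
  then have "\<rho> x \<le> max B 0" for x
    using assms(2) by (cases "norm x \<le> 1") (auto dest!: bspec[of _ _ x])
  then show ?thesis using that by blast
qed

lemma abs_mollifier_le:
  fixes \<rho> :: "'a::euclidean_space \<Rightarrow> real"
  assumes "\<forall>x. 0 \<le> \<rho> x" "\<And>x. \<rho> x \<le> M" "\<forall>x. norm x > 1 \<longrightarrow> \<rho> x = 0" "0 < \<delta>"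
  shows "ennreal \<bar>mollifier \<rho> \<delta> (y - w)\<bar> \<le> ennreal (\<delta> powr - DIM('a) * M) * indicator (cball y \<delta>) w"
proof (cases "dist y w \<le> \<delta>")
  case True
  then show ?thesis
    using assms by (simp add: mollifier_def ennreal_leI mult_left_mono)
next
  case False
  then have "1 < norm ((y - w) /\<^sub>R \<delta>)"
    using \<open>0 < \<delta>\<close> by (simp add: dist_norm divide_simps)
  then show ?thesis using assms(3) False by (simp add: mollifier_def)
qed

lemma norm_integral_le_nn_integral:
  "ennreal (norm (integral\<^sup>L M f)) \<le> (\<integral>\<^sup>+x. ennreal (norm (f x)) \<partial>M)"
  by (cases "integrable M f") (auto simp: integral_norm_bound_ennreal not_integrable_integral_eq)

lemma abs_mollified_le:
  fixes \<nu> :: "'a::euclidean_space measure"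
  assumes "sets \<nu> = sets borel"
    and "\<forall>x. 0 \<le> \<rho> x" "\<And>x. \<rho> x \<le> M" "\<forall>x. norm x > 1 \<longrightarrow> \<rho> x = 0" "0 < \<delta>"
  shows "ennreal \<bar>mollified \<nu> \<rho> \<delta> y\<bar> \<le> ennreal (\<delta> powr - DIM('a) * M) * emeasure \<nu> (cball y \<delta>)"
proof -
  have "ennreal \<bar>mollified \<nu> \<rho> \<delta> y\<bar> \<le> (\<integral>\<^sup>+w. ennreal \<bar>mollifier \<rho> \<delta> (y - w)\<bar> \<partial>\<nu>)"
    using norm_integral_le_nn_integral[of \<nu> "\<lambda>w. mollifier \<rho> \<delta> (y - w)"]
    by (simp add: mollified_def)
  also have "\<dots> \<le> (\<integral>\<^sup>+w. ennreal (\<delta> powr - DIM('a) * M) * indicator (cball y \<delta>) w \<partial>\<nu>)"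
    using assms by (intro nn_integral_mono abs_mollifier_le) auto
  also have "\<dots> = ennreal (\<delta> powr - DIM('a) * M) * emeasure \<nu> (cball y \<delta>)"
    using assms by (simp add: nn_integral_cmult_indicator)
  finally show ?thesis .
qed

lemma cmod_riesz_nu_le:
  fixes \<nu> :: "'a::euclidean_space measure"
  shows "ennreal (cmod (riesz_nu \<nu> \<rho> \<delta> \<alpha> x))
    \<le> ennreal (cmod (2 powr ((of_nat DIM('a) - \<alpha>) / 2) / Gamma (\<alpha> / 2)))
      * (\<integral>\<^sup>+y. ennreal \<bar>mollified \<nu> \<rho> \<delta> y\<bar> * ennreal (dist x y powr (Re \<alpha> - DIM('a))) \<partial>lborel)"
proof -
  define F where "F y = complex_of_real (mollified \<nu> \<rho> \<delta> y) *
    complex_of_real (norm (x - y)) powr (\<alpha> - of_nat DIM('a))" for y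
  have integrand: "ennreal (cmod (F y))
      = ennreal \<bar>mollified \<nu> \<rho> \<delta> y\<bar> * ennreal (dist x y powr (Re \<alpha> - DIM('a)))" for y
    by (simp add: F_def norm_mult norm_powr_real_powr dist_norm ennreal_mult')
  have "ennreal (cmod (riesz_nu \<nu> \<rho> \<delta> \<alpha> x))
      = ennreal (cmod (2 powr ((of_nat DIM('a) - \<alpha>) / 2) / Gamma (\<alpha> / 2)))
        * ennreal (cmod (integral\<^sup>L lborel F))"
    unfolding riesz_nu_def F_def norm_mult by (simp add: ennreal_mult')
  also have "\<dots> \<le> ennreal (cmod (2 powr ((of_nat DIM('a) - \<alpha>) / 2) / Gamma (\<alpha> / 2)))
      * (\<integral>\<^sup>+y. ennreal (cmod (F y)) \<partial>lborel)"
    by (intro mult_left_mono norm_integral_le_nn_integral) simp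
  finally show ?thesis by (simp only: integrand)
qed

lemma riesz_nu_L2_le:
  fixes \<nu> :: "'a::euclidean_space measure"
  assumes "prob_space \<nu>" and sets: "sets \<nu> = sets borel"
    and \<rho>: "\<forall>x. 0 \<le> \<rho> x" "\<And>x. \<rho> x \<le> M" "\<forall>x. norm x > 1 \<longrightarrow> \<rho> x = 0" and "0 < \<delta>"
    and comp: "\<And>y z :: 'a. (\<integral>\<^sup>+x. ennreal (dist x y powr (Re \<alpha> - DIM('a)))
      * ennreal (dist x z powr (Re \<alpha> - DIM('a))) \<partial>lborel) \<le> ennreal Kc * singular_powr g (dist y z)"
    and cballs: "\<And>w w'. cball_interaction (lborel :: 'a measure) g \<delta> w w'
      \<le> ennreal (K * \<delta> powr (2 * DIM('a))) * singular_powr g (dist w w')"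
    and potential: "\<And>w. (\<integral>\<^sup>+w'. singular_powr g (dist w w') \<partial>\<nu>) \<le> ennreal L"
    and "0 \<le> Kc" "0 \<le> K" "0 \<le> L"
  shows "(\<integral>\<^sup>+x. ennreal ((cmod (riesz_nu \<nu> \<rho> \<delta> \<alpha> x))\<^sup>2) \<partial>lborel)
    \<le> ennreal ((cmod (2 powr ((of_nat DIM('a) - \<alpha>) / 2) / Gamma (\<alpha> / 2)))\<^sup>2 * Kc * M\<^sup>2 * K * L)"
proof -
  interpret prob_space \<nu> by fact
  \<comment> \<open>The factor \<open>\<delta>^(-2d)\<close> coming from the mollifier cancels the \<open>\<delta>^(2d)\<close> in \<open>cballs\<close>.\<close>
  define c where "c = cmod (2 powr ((of_nat DIM('a) - \<alpha>) / 2) / Gamma (\<alpha> / 2))"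
  define d where "d = \<delta> powr - DIM('a) * M"
  define I where
    "I x = (\<integral>\<^sup>+y. emeasure \<nu> (cball y \<delta>) * ennreal (dist x y powr (Re \<alpha> - DIM('a))) \<partial>lborel)" for x
  have "0 \<le> M" using \<rho>(1,2) order_trans by blast
  then have "0 \<le> d" by (simp add: d_def)
  have "0 \<le> c" by (simp add: c_def)
  have [measurable]: "(\<lambda>y. emeasure \<nu> (cball y \<delta>)) \<in> borel_measurable borel"
    using sets sigma_finite_measure_axioms by (intro borel_measurable_emeasure_cball)
  have pointwise: "ennreal ((cmod (riesz_nu \<nu> \<rho> \<delta> \<alpha> x))\<^sup>2) \<le> ennreal ((c * d)\<^sup>2) * (I x)\<^sup>2" for x
  proof -
    have "ennreal (cmod (riesz_nu \<nu> \<rho> \<delta> \<alpha> x))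
        \<le> ennreal c * (\<integral>\<^sup>+y. ennreal d * emeasure \<nu> (cball y \<delta>)
          * ennreal (dist x y powr (Re \<alpha> - DIM('a))) \<partial>lborel)"
      unfolding c_def d_def using assms
      by (intro order.trans[OF cmod_riesz_nu_le] mult_left_mono nn_integral_mono mult_right_mono
          abs_mollified_le) auto
    also have "\<dots> = ennreal (c * d) * I x"
      unfolding I_def ennreal_mult'[OF \<open>0 \<le> c\<close>] by (simp add: nn_integral_cmult mult.assoc)
    finally have "(ennreal (cmod (riesz_nu \<nu> \<rho> \<delta> \<alpha> x)))\<^sup>2 \<le> (ennreal (c * d) * I x)\<^sup>2"
      by (rule power_mono) simp
    moreover have "ennreal ((c * d)\<^sup>2) = (ennreal (c * d))\<^sup>2"
      using \<open>0 \<le> c\<close> \<open>0 \<le> d\<close> by (simp add: ennreal_power)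
    ultimately show ?thesis by (simp add: power_mult_distrib ennreal_power)
  qed
  define J where "J = (\<integral>\<^sup>+y. \<integral>\<^sup>+z. emeasure \<nu> (cball y \<delta>) * emeasure \<nu> (cball z \<delta>)
    * singular_powr g (dist y z) \<partial>lborel \<partial>lborel)"
  have "(\<integral>\<^sup>+x. ennreal ((cmod (riesz_nu \<nu> \<rho> \<delta> \<alpha> x))\<^sup>2) \<partial>lborel)
      \<le> ennreal ((c * d)\<^sup>2) * (\<integral>\<^sup>+x. (I x)\<^sup>2 \<partial>lborel)"
    unfolding I_def
    by (subst nn_integral_cmult[symmetric]) (measurable, intro nn_integral_mono pointwise[unfolded I_def])
  also have "\<dots> \<le> ennreal ((c * d)\<^sup>2) * (ennreal Kc * J)"
    unfolding I_def J_def
    by (intro mult_left_mono nn_integral_potential_square_le[OF sigma_finite_lborel _ _ _ comp]) simp_all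
  also have "\<dots> \<le> ennreal ((c * d)\<^sup>2) * (ennreal Kc * ennreal (K * \<delta> powr (2 * DIM('a)) * L))"
    unfolding J_def using assms cballs potential
    by (intro mult_left_mono nn_integral_cball_measure_energy_le) (auto simp: sigma_finite_lborel)
  also have "\<dots> = ennreal (c\<^sup>2 * Kc * M\<^sup>2 * K * L)"
  proof -
    have "(c * d)\<^sup>2 * (Kc * (K * \<delta> powr (2 * DIM('a)) * L)) = c\<^sup>2 * Kc * M\<^sup>2 * K * L"
      using \<open>0 < \<delta>\<close> by (simp add: d_def power2_eq_square powr_add[symmetric] mult_ac)
    then show ?thesis using \<open>0 \<le> Kc\<close> \<open>0 \<le> K\<close> \<open>0 \<le> L\<close> \<open>0 < \<delta>\<close>
      by (simp add: ennreal_mult'[symmetric] del: ennreal_mult)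
  qed
  finally show ?thesis unfolding c_def .
qed

lemma emeasure_lborel_ball_powr:
  fixes w :: "'a::euclidean_space"
  shows "0 < r \<Longrightarrow> emeasure lborel (ball w r) = ennreal (unit_ball_vol DIM('a) * r powr DIM('a))"
  by (simp add: emeasure_ball powr_realpow)

lemma emeasure_lborel_cball_powr:
  fixes w :: "'a::euclidean_space"
  shows "0 < r \<Longrightarrow> emeasure lborel (cball w r) = ennreal (unit_ball_vol DIM('a) * r powr DIM('a))"
  by (simp add: emeasure_cball powr_realpow)

lemma frostman_measure_ball_le:
  assumes "frostman_measure \<nu> E a"
  obtains A t where "0 \<le> A" "a < t"
    "\<And>w r. 0 < r \<Longrightarrow> emeasure \<nu> (ball w r) \<le> ennreal (A * r powr t)"
proof -
  obtain C t where "a < t" and C: "\<And>w r. 0 < r \<Longrightarrow> measure \<nu> (ball w r) \<le> C * r powr t"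
    using assms by (auto simp: frostman_measure_def)
  interpret prob_space \<nu> using assms by (simp add: frostman_measure_def)
  have "emeasure \<nu> (ball w r) \<le> ennreal (max C 0 * r powr t)" if "0 < r" for w r
  proof -
    have "measure \<nu> (ball w r) \<le> max C 0 * r powr t"
      by (rule order_trans[OF C[OF that]]) (simp add: mult_right_mono)
    then show ?thesis by (simp add: emeasure_eq_measure ennreal_leI)
  qed
  then show ?thesis using \<open>a < t\<close> by (intro that[of "max C 0" t]) auto
qed

lemma riesz_nu_L2_uniformly_bounded:
  fixes \<nu> :: "'a::euclidean_space measure" and s t :: real
  assumes "prob_space \<nu>" and sets: "sets \<nu> = sets borel"
    and "0 \<le> A" "DIM('a) - s < t"
    and ball: "\<And>w r. 0 < r \<Longrightarrow> emeasure \<nu> (ball w r) \<le> ennreal (A * r powr t)"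
    and "0 < s" "s < DIM('a)" "Re \<alpha> = s / 2"
    and \<rho>: "\<forall>x. 0 \<le> \<rho> x" "\<And>x. \<rho> x \<le> M" "\<forall>x. norm x > 1 \<longrightarrow> \<rho> x = 0"
  shows "\<exists>C. \<forall>\<delta>>0. (\<integral>\<^sup>+x. ennreal ((cmod (riesz_nu \<nu> \<rho> \<delta> \<alpha> x))\<^sup>2) \<partial>lborel) \<le> ennreal C"
proof -
  have exponent: "Re \<alpha> - DIM('a) = - (DIM('a) - s / 2)"
    using \<open>Re \<alpha> = s / 2\<close> by simp
  obtain Kc where "Kc > 0" and comp: "\<forall>y z::'a.
      (\<integral>\<^sup>+x. ennreal (dist x y powr (Re \<alpha> - DIM('a))) * ennreal (dist x z powr (Re \<alpha> - DIM('a))) \<partial>lborel)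
        \<le> ennreal Kc * singular_powr (DIM('a) - s) (dist y z)"
    using riesz_kernel_composition[of lborel "unit_ball_vol DIM('a)" "DIM('a)" "DIM('a) - s / 2"] assms
    unfolding exponent by (auto simp: emeasure_lborel_ball_powr)
  obtain K where "K > 0" and cballs: "\<forall>\<delta>>0. \<forall>w w'.
      cball_interaction (lborel :: 'a measure) (DIM('a) - s) \<delta> w w'
        \<le> ennreal (K * \<delta> powr (2 * DIM('a))) * singular_powr (DIM('a) - s) (dist w w')"
    using nn_integral_singular_powr_cballs_le[of lborel "unit_ball_vol DIM('a)" "DIM('a)" "DIM('a) - s"]
      assms by (auto simp: emeasure_lborel_cball_powr)
  obtain L where "L \<ge> 0"
    and potential: "\<forall>w. (\<integral>\<^sup>+w'. singular_powr (DIM('a) - s) (dist w w') \<partial>\<nu>) \<le> ennreal L"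
    using singular_powr_potential_bounded[OF sets _ \<open>0 \<le> A\<close> ball, of "DIM('a) - s"] assms
    by (auto simp: prob_space_def)
  have "(\<integral>\<^sup>+x. ennreal ((cmod (riesz_nu \<nu> \<rho> \<delta> \<alpha> x))\<^sup>2) \<partial>lborel)
      \<le> ennreal ((cmod (2 powr ((of_nat DIM('a) - \<alpha>) / 2) / Gamma (\<alpha> / 2)))\<^sup>2 * Kc * M\<^sup>2 * K * L)"
    if "0 < \<delta>" for \<delta>
    using that comp cballs potential \<open>Kc > 0\<close> \<open>K > 0\<close> \<open>L \<ge> 0\<close>
    by (intro riesz_nu_L2_le[OF \<open>prob_space \<nu>\<close> sets \<rho>]) auto
  then show ?thesis by blast
qed

theorem lemma4:
  fixes \<nu> :: "'a::euclidean_space measure" and E :: "'a set"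
    and \<rho> :: "'a \<Rightarrow> real" and s :: real
  assumes "0 < s" and "s < real DIM('a)"
    and "compact E"
    and "hausdorff_dim E > real DIM('a) - s"
    and "frostman_measure \<nu> E (real DIM('a) - s)"
    and "smooth_fun \<rho>" and "\<forall>x. \<rho> x \<ge> 0"
    and "\<rho> integrable_on UNIV" and "integral UNIV \<rho> = 1"
    and "\<forall>x. norm x > 1 \<longrightarrow> \<rho> x = 0"
  shows "\<forall>\<alpha>::complex. Re \<alpha> = s / 2 \<longrightarrow>
           (\<exists>C::real. \<forall>\<delta>\<in>{0<..1}.
              (\<integral>\<^sup>+x. ennreal ((cmod (riesz_nu \<nu> \<rho> \<delta> \<alpha> x))\<^sup>2) \<partial>lborel) \<le> ennreal C)"
proof (intro allI impI)
  fix \<alpha> :: complex assume "Re \<alpha> = s / 2"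
  have \<nu>: "prob_space \<nu>" "sets \<nu> = sets borel"
    using assms(5) by (auto simp: frostman_measure_def)
  obtain A t where A: "0 \<le> A" "DIM('a) - s < t"
    and ball: "\<And>w r. 0 < r \<Longrightarrow> emeasure \<nu> (ball w r) \<le> ennreal (A * r powr t)"
    using frostman_measure_ball_le[OF assms(5)] by blast
  obtain M where M: "\<And>x. \<rho> x \<le> M"
    using compactly_supported_bounded[OF smooth_fun_continuous[OF assms(6)] assms(10)] by blast
  obtain C where "\<forall>\<delta>>0. (\<integral>\<^sup>+x. ennreal ((cmod (riesz_nu \<nu> \<rho> \<delta> \<alpha> x))\<^sup>2) \<partial>lborel) \<le> ennreal C"
    using riesz_nu_L2_uniformly_bounded[OF \<nu> A ball assms(1,2) \<open>Re \<alpha> = s / 2\<close> assms(7) M assms(10)]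
    by blast
  then show "\<exists>C. \<forall>\<delta>\<in>{0<..1}. (\<integral>\<^sup>+x. ennreal ((cmod (riesz_nu \<nu> \<rho> \<delta> \<alpha> x))\<^sup>2) \<partial>lborel) \<le> ennreal C"
    by (intro exI[of _ C]) auto
qed

end
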